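(* Let $q\in X^*\setminus\{e\}$ and let $q_0$ be the shortest word in $P_q$. If $|q_0|$ does not divide $|q|$ and $|q_0|\le|q|/2$, then there exists $q'\in X^*\setminus\{e\}$ with $P_q^*\subsetneq P_{q'}^*$. Consequently, if $|q_0|$ does not divide $|q|$ and $P_q^*$ is maximal with respect to inclusion in the class $\{P_{q'}^*: q'\in X^*\setminus\{e\}\}$, then $|q_0|>|q|/2$.
   Context: $X$ is a finite alphabet; $X^*$ the finite words (empty word $e$); $|w|$ is length; $w\sqsubseteq\eta$ means $w$ is a prefix of $\eta$, $w\sqsubset\eta$ a proper prefix. For $q\in X^*\setminus\{e\}$, $P_q:=\{v: e\sqsubset v\sqsubseteq q\sqsubset v\cdot q\}$; $q_0$ is its shortest element. $L^*=\bigcup_{i\in\mathbb{N}}L^i$. *)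

theory Defs
  imports Complex_Main "HOL-Library.Sublist"
begin

definition Pq :: "'a list \<Rightarrow> 'a list set" where
  "Pq q = {v. strict_prefix [] v \<and> prefix v q \<and> strict_prefix q (v @ q)}"

definition lconc :: "'a list set \<Rightarrow> 'a list set \<Rightarrow> 'a list set" where
  "lconc A B = {u @ v | u v. u \<in> A \<and> v \<in> B}"

fun lpow :: "'a list set \<Rightarrow> nat \<Rightarrow> 'a list set" where
  "lpow L 0 = {[]}"
| "lpow L (Suc n) = lconc L (lpow L n)"

definition lstar :: "'a list set \<Rightarrow> 'a list set" where
  "lstar L = (\<Union>i. lpow L i)"

end

theory Submission imports Defs begin

(* A word v belongs to P_q exactly when v = take |v| q and |v| is a
   period of q (q!i = q!(i-|v|) for |v| \<le> i < |q|), 0 < |v| \<le> |q|.  Let p0 = |q0|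
   be the least period of q, with 2 p0 \<le> |q| and p0 not dividing |q|, and put
   q' = take (|q| - p0) q.
   (1) P_q \<subseteq> P_{q'}^*: a period p \<le> |q| - p0 of q is also a period of q', so
       take p q \<in> P_{q'}; a larger period p splits as take p q = q0 @ take (p-p0) q
       with both factors in P_{q'}.
   (2) q' \<notin> P_q^*: by the Fine--Wilf theorem every period p \<le> |q| - p0 of q is a
       multiple of p0, so every word of P_q^* has length divisible by p0 or longer
       than |q'|; but p0 divides |q'| = |q| - p0 only if p0 divides |q|.
   Since q' \<in> P_{q'}, (1) and (2) give P_q^* \<subset> P_{q'}^*. *)

definition per :: "'a list \<Rightarrow> nat \<Rightarrow> bool" where
  "per w p \<longleftrightarrow> (\<forall>i. p \<le> i \<and> i < length w \<longrightarrow> w!i = w!(i-p))"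

lemma perD: "per w p \<Longrightarrow> p \<le> i \<Longrightarrow> i < length w \<Longrightarrow> w!i = w!(i-p)"
  unfolding per_def by blast

lemma prefix_nth: "prefix xs ys \<longleftrightarrow> length xs \<le> length ys \<and> (\<forall>i<length xs. xs!i = ys!i)"
proof
  assume "prefix xs ys"
  then obtain zs where "ys = xs @ zs" by (auto simp: prefix_def)
  then show "length xs \<le> length ys \<and> (\<forall>i<length xs. xs!i = ys!i)" by (auto simp: nth_append)
next
  assume "length xs \<le> length ys \<and> (\<forall>i<length xs. xs!i = ys!i)"
  then have "take (length xs) ys = xs" by (intro nth_equalityI) auto
  then show "prefix xs ys" by (metis prefix_def append_take_drop_id)
qed

lemma Pq_iff:
  "v \<in> Pq q \<longleftrightarrow> v = take (length v) q \<and> 0 < length v \<and> length v \<le> length q \<and> per q (length v)"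
proof -
  have prefix_take: "prefix v q \<longleftrightarrow> v = take (length v) q \<and> length v \<le> length q"
  proof
    assume "v = take (length v) q \<and> length v \<le> length q"
    then show "prefix v q" by (metis take_is_prefix)
  qed (auto simp: prefix_def)
  have period: "prefix q (v @ q) \<longleftrightarrow> per q (length v)" if "prefix v q"
  proof -
    have "\<forall>i<length v. v!i = q!i" using that by (auto simp: prefix_nth)
    then show ?thesis unfolding prefix_nth per_def by (auto simp: nth_append)
  qed
  show ?thesis
    unfolding Pq_def using prefix_take period by (auto simp: strict_prefix_def)
qed

corollary take_in_Pq: "0 < p \<Longrightarrow> p \<le> length q \<Longrightarrow> per q p \<Longrightarrow> take p q \<in> Pq q"
  by (simp add: Pq_iff min_def)

lemma per_self: "per w (length w)"
  unfolding per_def by auto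

lemma per_take: "per w p \<Longrightarrow> per (take m w) p"
  unfolding per_def by (simp add: less_imp_diff_less)

lemma per_diff:
  assumes p: "per w p" and r: "per w r" and "p < r" "r + p \<le> length w"
  shows "per w (r - p)"
  unfolding per_def
proof (intro allI impI)
  fix i assume i: "r - p \<le> i \<and> i < length w"
  show "w!i = w!(i-(r-p))"
  proof (cases "r \<le> i")
    case True
    have "w!(i-(r-p)) = w!(i-(r-p)-p)" by (rule perD[OF p]) (use i True \<open>p < r\<close> in auto)
    also have "i-(r-p)-p = i-r" using True \<open>p < r\<close> by simp
    also have "w!(i-r) = w!i" using perD[OF r, of i] i True by simp
    finally show ?thesis by simp
  next
    case False
    then have "w!i = w!(i+p)" using perD[OF p, of "i+p"] assms(4) by simp
    also have "\<dots> = w!(i+p-r)" using perD[OF r, of "i+p"] False i assms(4) by simp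
    also have "i+p-r = i-(r-p)" using i \<open>p < r\<close> False by simp
    finally show ?thesis .
  qed
qed

theorem fine_wilf:
  "per w p \<Longrightarrow> per w r \<Longrightarrow> 0 < p \<Longrightarrow> 0 < r \<Longrightarrow> p + r \<le> length w \<Longrightarrow> per w (gcd p r)"
proof (induction "p + r" arbitrary: p r rule: less_induct)
  case less
  show ?case
  proof (cases p r rule: linorder_cases)
    case p_less: less
    have "per w (r - p)" using per_diff[OF less(2,3) p_less] less(6) by simp
    moreover have "p + (r - p) < p + r" "0 < r - p" "p + (r - p) \<le> length w"
      using p_less less(4,6) by linarith+
    ultimately have "per w (gcd p (r - p))" using less.hyps less(2,4) by blast
    then show ?thesis using p_less gcd_add2[of p "r - p"] by simp
  next
    case equal
    then show ?thesis using less(2) by simp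
  next
    case greater
    have "per w (p - r)" using per_diff[OF less(3,2) greater] less(6) by simp
    moreover have "(p - r) + r < p + r" "0 < p - r" "(p - r) + r \<le> length w"
      using greater less(5,6) by linarith+
    ultimately have "per w (gcd (p - r) r)" using less.hyps less(3,5) by blast
    then show ?thesis using greater by (simp add: gcd_diff1_nat)
  qed
qed

lemma least_period_dvd:
  assumes least: "\<And>r. 0 < r \<Longrightarrow> r \<le> length w \<Longrightarrow> per w r \<Longrightarrow> p0 \<le> r"
    and "per w p0" "0 < p0" "per w p" "0 < p" "p + p0 \<le> length w"
  shows "p0 dvd p"
proof -
  have "per w (gcd p p0)" using fine_wilf assms(2-6) by blast
  moreover have "gcd p p0 \<le> p0" using \<open>0 < p0\<close> by simp
  moreover have "p0 \<le> gcd p p0"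
    using least[of "gcd p p0"] \<open>per w (gcd p p0)\<close> \<open>0 < p\<close> \<open>gcd p p0 \<le> p0\<close> assms(6) by simp
  ultimately have "gcd p p0 = p0" by simp
  then show ?thesis by (metis gcd_dvd1)
qed

lemma take_period_split:
  assumes "per w p0" "p0 \<le> p" "p \<le> length w"
  shows "take p w = take p0 w @ take (p - p0) w"
proof (rule nth_equalityI)
  fix i assume i: "i < length (take p w)"
  show "take p w ! i = (take p0 w @ take (p - p0) w) ! i"
  proof (cases "i < p0")
    case False
    then have "w!i = w!(i-p0)" using perD[OF assms(1)] i by simp
    then show ?thesis using i False assms(2,3) by (simp add: nth_append)
  qed (use i assms in \<open>simp add: nth_append\<close>)
qed (use assms in simp)

lemma per_take_diff:
  assumes p0: "per w p0" and p: "per w p" and "p0 < p"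
  shows "per (take (length w - p0) w) (p - p0)"
  unfolding per_def
proof (intro allI impI)
  fix i assume i: "p - p0 \<le> i \<and> i < length (take (length w - p0) w)"
  then have i_lt: "i < length w - p0" by simp
  have "w!i = w!(i+p0)" using perD[OF p0, of "i+p0"] i_lt by simp
  also have "\<dots> = w!(i+p0-p)" by (rule perD[OF p]) (use i i_lt \<open>p0 < p\<close> in auto)
  also have "i+p0-p = i-(p-p0)" using i \<open>p0 < p\<close> by simp
  finally show "take (length w - p0) w ! i = take (length w - p0) w ! (i-(p-p0))"
    using i_lt by simp
qed

lemma lstar_single: "x \<in> M \<Longrightarrow> x \<in> lstar M"
  unfolding lstar_def by (rule UN_I[of 1]) (auto simp: lconc_def)

lemma lstar_induct [consumes 1, case_names Nil app]:
  assumes "x \<in> lstar M" "P []" "\<And>u v. u \<in> M \<Longrightarrow> P v \<Longrightarrow> P (u @ v)"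
  shows "P x"
proof -
  obtain n where "x \<in> lpow M n" using assms(1) by (auto simp: lstar_def)
  then show ?thesis
    by (induction n arbitrary: x) (auto simp: lconc_def assms(2,3))
qed

lemma lstar_app: "x \<in> lstar M \<Longrightarrow> y \<in> lstar M \<Longrightarrow> x @ y \<in> lstar M"
proof (induction x rule: lstar_induct)
  case Nil
  then show ?case by simp
next
  case (app u v)
  then obtain m where "v @ y \<in> lpow M m" by (auto simp: lstar_def)
  then have "u @ v @ y \<in> lpow M (Suc m)" using app(1) by (auto simp: lconc_def)
  then show ?case unfolding lstar_def by (metis UN_I UNIV_I append_assoc)
qed

lemma lstar_subset:
  assumes "L \<subseteq> lstar M" shows "lstar L \<subseteq> lstar M"
proof
  fix x assume "x \<in> lstar L"
  then show "x \<in> lstar M"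
  proof (induction x rule: lstar_induct)
    case Nil
    show ?case using lstar_def by (metis UN_I UNIV_I lpow.simps(1) singletonI)
  qed (use assms lstar_app in blast)
qed

lemma Pq_in_lstar_shorter:
  assumes per0: "per q p0" "0 < p0" and le: "2 * p0 \<le> length q"
    and v: "v \<in> Pq q"
  shows "v \<in> lstar (Pq (take (length q - p0) q))"
proof -
  define q' where "q' = take (length q - p0) q"
  have factor: "take r q \<in> Pq q'" if "0 < r" "r \<le> length q - p0" "per q' r" for r
  proof -
    have "take r q' = take r q" using that(2) by (simp add: q'_def)
    then show ?thesis using take_in_Pq[of r q'] that by (simp add: q'_def)
  qed
  define p where "p = length v"
  have vp: "v = take p q" "0 < p" "p \<le> length q" "per q p"
    using v unfolding Pq_iff p_def by blast+
  show ?thesis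
  proof (cases "p \<le> length q - p0")
    case True
    then have "v \<in> Pq q'" using vp factor per_take[OF vp(4)] unfolding q'_def by simp
    then show ?thesis unfolding q'_def by (rule lstar_single)
  next
    case False
    then have "p0 < p" using le by simp
    have split: "v = take p0 q @ take (p - p0) q"
      using take_period_split[OF per0(1) less_imp_le[OF \<open>p0 < p\<close>] vp(3)] vp(1) by simp
    have "take p0 q \<in> Pq q'"
      by (rule factor) (use per0 le per_take[OF per0(1)] in \<open>simp_all add: q'_def\<close>)
    moreover have "take (p - p0) q \<in> Pq q'"
      by (rule factor)
        (use per_take_diff[OF per0(1) vp(4) \<open>p0 < p\<close>] \<open>p0 < p\<close> vp(3) in \<open>simp_all add: q'_def\<close>)
    ultimately have "take p0 q @ take (p - p0) q \<in> lstar (Pq q')"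
      by (intro lstar_app lstar_single)
    then show ?thesis unfolding split q'_def .
  qed
qed

lemma lstar_Pq_lengths:
  assumes least: "\<And>r. 0 < r \<Longrightarrow> r \<le> length q \<Longrightarrow> per q r \<Longrightarrow> p0 \<le> r"
    and "per q p0" "0 < p0" and x: "x \<in> lstar (Pq q)"
  shows "p0 dvd length x \<or> length q - p0 < length x"
  using x
proof (induction x rule: lstar_induct)
  case (app u v)
  have "0 < length u" "length u \<le> length q" "per q (length u)"
    using app(1) unfolding Pq_iff by blast+
  then have "p0 dvd length u \<or> length q - p0 < length u"
    using least_period_dvd[OF least assms(2,3), of "length u"]
    by (cases "length u + p0 \<le> length q") (simp, linarith)
  then show ?case using app(2) by auto
qed simp

theorem Pq_star_extension:
  assumes q0: "q0 \<in> Pq q" and least: "\<forall>v \<in> Pq q. length q0 \<le> length v"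
    and nd: "\<not> length q0 dvd length q" and le: "2 * length q0 \<le> length q"
  shows "lstar (Pq q) \<subset> lstar (Pq (take (length q - length q0) q))"
proof -
  define p0 where "p0 = length q0"
  define q' where "q' = take (length q - p0) q"
  have per0: "per q p0" "0 < p0" using q0 unfolding Pq_iff p0_def by blast+
  have le0: "2 * p0 \<le> length q" using le unfolding p0_def .
  have len': "length q' = length q - p0" by (simp add: q'_def)
  have least_per: "p0 \<le> r" if "0 < r" "r \<le> length q" "per q r" for r
    using least take_in_Pq[OF that] that unfolding p0_def by auto
  have "lstar (Pq q) \<subseteq> lstar (Pq q')"
    by (rule lstar_subset) (use Pq_in_lstar_shorter[OF per0 le0] in \<open>auto simp: q'_def\<close>)
  moreover have "q' \<in> lstar (Pq q')"
  proof (rule lstar_single)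
    have "0 < length q'" using len' per0(2) le0 by linarith
    then show "q' \<in> Pq q'" using per_self[of q'] by (simp add: Pq_iff)
  qed
  moreover have "q' \<notin> lstar (Pq q)"
  proof
    assume "q' \<in> lstar (Pq q)"
    then have "p0 dvd length q' \<or> length q - p0 < length q'"
      using lstar_Pq_lengths[of q p0 q'] least_per per0 by blast
    then have "p0 dvd length q - p0" using len' by simp
    then have "p0 dvd length q" using le0 dvd_diffD[of p0 "length q" p0] by simp
    then show False using nd p0_def by simp
  qed
  ultimately show ?thesis unfolding q'_def p0_def by blast
qed

theorem lemma4:
  fixes X :: "'a set" and q q0 :: "'a list"
  assumes "finite X"
    and "q \<in> lists X" and "q \<noteq> []"
    and "q0 \<in> Pq q" and "\<forall>v \<in> Pq q. length q0 \<le> length v"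
  shows "(\<not> length q0 dvd length q \<and> real (length q0) \<le> real (length q) / 2
           \<longrightarrow> (\<exists>q' \<in> lists X - {[]}. lstar (Pq q) \<subset> lstar (Pq q')))
       \<and> (\<not> length q0 dvd length q
           \<and> \<not> (\<exists>q' \<in> lists X - {[]}. lstar (Pq q) \<subset> lstar (Pq q'))
           \<longrightarrow> real (length q0) > real (length q) / 2)"
proof -
  have extension: "\<exists>q' \<in> lists X - {[]}. lstar (Pq q) \<subset> lstar (Pq q')"
    if nd: "\<not> length q0 dvd length q" and le: "real (length q0) \<le> real (length q) / 2"
  proof -
    define q' where "q' = take (length q - length q0) q"
    have le2: "2 * length q0 \<le> length q" using le by simp
    have "0 < length q0" using assms(4) unfolding Pq_iff by blast
    moreover have "length q' = length q - length q0" by (simp add: q'_def)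
    ultimately have "0 < length q'" using le2 by linarith
    then have "q' \<noteq> []" by simp
    moreover have "q' \<in> lists X" using assms(2) unfolding q'_def by (auto dest: in_set_takeD)
    moreover have "lstar (Pq q) \<subset> lstar (Pq q')"
      unfolding q'_def by (rule Pq_star_extension[OF assms(4,5) nd le2])
    ultimately show ?thesis by blast
  qed
  show ?thesis
  proof (intro conjI impI)
    assume "\<not> length q0 dvd length q \<and> \<not> (\<exists>q' \<in> lists X - {[]}. lstar (Pq q) \<subset> lstar (Pq q'))"
    then show "real (length q0) > real (length q) / 2" using extension by (meson not_less)
  qed (use extension in blast)
qed

end
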